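(* For every finite connected undirected unweighted graph $G=(V,E)$ with $n$ vertices, every $r\ge 1$ and every $S_0\subseteq V$, $\mathrm{fp}^{1/2,r}_G(S_0)\ge |S_0|/n$.
   Context: The $\lambda$-mixed Moran process on a connected graph $G=(V,E)$ with $n=|V|\ge 2$: each vertex hosts a resident (fitness $1$) or mutant (fitness $r>0$); the state is the mutant set $S_t\subseteq V$. Each step, independently: with probability $\lambda$ a Birth-death step (a vertex $u$ chosen with probability proportional to fitness among all vertices; a uniformly random neighbor of $u$ takes $u$'s type); with probability $1-\lambda$ a death-Birth step (a uniformly random vertex $v$ dies; a neighbor $u$ of $v$ chosen with probability proportional to fitness among the neighbors of $v$; $v$ takes $u$'s type). $\mathrm{fp}^{\lambda,r}_G(S_0)$ is the probability that the process started at $S_0$ reaches $S_t=V$. *)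

theory Defs
  imports Complex_Main
begin

definition conn_graph :: "'a set \<Rightarrow> ('a \<Rightarrow> 'a \<Rightarrow> bool) \<Rightarrow> bool" where
  "conn_graph V E \<longleftrightarrow> finite V \<and> card V \<ge> 2
     \<and> (\<forall>u v. E u v \<longrightarrow> u \<in> V \<and> v \<in> V)
     \<and> (\<forall>u v. E u v \<longrightarrow> E v u)
     \<and> (\<forall>u. \<not> E u u)
     \<and> (\<forall>u\<in>V. \<forall>v\<in>V. E\<^sup>*\<^sup>* u v)"

definition nbrs :: "'a set \<Rightarrow> ('a \<Rightarrow> 'a \<Rightarrow> bool) \<Rightarrow> 'a \<Rightarrow> 'a set" where
  "nbrs V E u = {v \<in> V. E u v}"

text \<open>fitness of vertex x in state S (mutant set)\<close>
definition fit :: "real \<Rightarrow> 'a set \<Rightarrow> 'a \<Rightarrow> real" where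
  "fit r S x = (if x \<in> S then r else 1)"

definition repl :: "'a set \<Rightarrow> 'a \<Rightarrow> 'a \<Rightarrow> 'a set" where
  "repl S u v = (if u \<in> S then insert v S else S - {v})"

definition bd_trans :: "'a set \<Rightarrow> ('a \<Rightarrow> 'a \<Rightarrow> bool) \<Rightarrow> real \<Rightarrow> 'a set \<Rightarrow> 'a set \<Rightarrow> real" where
  "bd_trans V E r S T =
     (\<Sum>u\<in>V. \<Sum>v\<in>nbrs V E u.
        (fit r S u / (\<Sum>x\<in>V. fit r S x)) * (1 / real (card (nbrs V E u)))
        * (if repl S u v = T then 1 else 0))"

definition db_trans :: "'a set \<Rightarrow> ('a \<Rightarrow> 'a \<Rightarrow> bool) \<Rightarrow> real \<Rightarrow> 'a set \<Rightarrow> 'a set \<Rightarrow> real" where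
  "db_trans V E r S T =
     (\<Sum>v\<in>V. \<Sum>u\<in>nbrs V E v.
        (1 / real (card V)) * (fit r S u / (\<Sum>x\<in>nbrs V E v. fit r S x))
        * (if repl S u v = T then 1 else 0))"

definition mixed_trans :: "'a set \<Rightarrow> ('a \<Rightarrow> 'a \<Rightarrow> bool) \<Rightarrow> real \<Rightarrow> real \<Rightarrow> 'a set \<Rightarrow> 'a set \<Rightarrow> real" where
  "mixed_trans V E lam r S T = lam * bd_trans V E r S T + (1 - lam) * db_trans V E r S T"

fun msteps :: "'a set \<Rightarrow> ('a \<Rightarrow> 'a \<Rightarrow> bool) \<Rightarrow> real \<Rightarrow> real \<Rightarrow> nat \<Rightarrow> 'a set \<Rightarrow> 'a set \<Rightarrow> real" where
  "msteps V E lam r 0 S T = (if S = T then 1 else 0)"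
| "msteps V E lam r (Suc t) S T = (\<Sum>U\<in>Pow V. mixed_trans V E lam r S U * msteps V E lam r t U T)"

text \<open>Fixation probability: probability of ever reaching the absorbing state V,
  which equals the limit of the probability of being at V at time t.\<close>
definition fp :: "'a set \<Rightarrow> ('a \<Rightarrow> 'a \<Rightarrow> bool) \<Rightarrow> real \<Rightarrow> real \<Rightarrow> 'a set \<Rightarrow> real" where
  "fp V E lam r S0 = lim (\<lambda>t. msteps V E lam r t S0 V)"

end

theory Submission
  imports Defs
begin

text \<open>
  With \<open>\<lambda> = 1/2\<close>, along an edge from a mutant \<open>u\<close> to a resident \<open>v\<close> the mutant
  type spreads at rate \<open>r/(2 F d\<^sub>u) + r/(2 n F\<^sub>v)\<close> and the resident type at rate
  \<open>1/(2 F d\<^sub>v) + 1/(2 n F\<^sub>u)\<close>, where \<open>F\<close> is the total fitness, \<open>d\<close> the degree and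
  \<open>F\<^sub>x\<close> the fitness of the neighbourhood of \<open>x\<close>. Since \<open>n \<le> F \<le> r n\<close>,
  \<open>d\<^sub>u \<le> F\<^sub>u\<close> and \<open>F\<^sub>v \<le> r d\<^sub>v\<close>, the first rate dominates, so \<open>|S\<^sub>t|\<close> is a
  submartingale and \<open>E |S\<^sub>t| \<ge> |S\<^sub>0|\<close>.
  In a transient state some boundary edge fires with probability at least \<open>1/(2n\<^sup>2)\<close>,
  so each transient step raises \<open>E |S\<^sub>t|\<^sup>2\<close> by at least that much; as \<open>|S\<^sub>t|\<^sup>2 \<le> n\<^sup>2\<close>,
  the expected time spent in transient states is finite and \<open>P(S\<^sub>t transient) \<rightarrow> 0\<close>.
  Finally \<open>|S\<^sub>0| \<le> E |S\<^sub>t| \<le> n P(S\<^sub>t = V) + n P(S\<^sub>t transient)\<close>, and \<open>t \<rightarrow> \<infinity>\<close> gives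
  \<open>|S\<^sub>0| \<le> n fp\<close>.
\<close>

lemma sum_indicator_pushforward:
  fixes \<phi> :: "'s \<Rightarrow> real"
  assumes "finite A" "\<And>u. u \<in> A \<Longrightarrow> finite (B u)" "finite P"
    and "\<And>u v. u \<in> A \<Longrightarrow> v \<in> B u \<Longrightarrow> g u v \<in> P"
  shows "(\<Sum>U\<in>P. (\<Sum>u\<in>A. \<Sum>v\<in>B u. c u v * (if g u v = U then 1 else 0)) * \<phi> U)
        = (\<Sum>u\<in>A. \<Sum>v\<in>B u. c u v * \<phi> (g u v))"
proof -
  have "(\<Sum>U\<in>P. (\<Sum>u\<in>A. \<Sum>v\<in>B u. c u v * (if g u v = U then 1 else 0)) * \<phi> U)
      = (\<Sum>U\<in>P. \<Sum>u\<in>A. \<Sum>v\<in>B u. (if g u v = U then c u v * \<phi> U else 0))"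
    by (simp add: sum_distrib_right; intro sum.cong refl; simp)
  also have "\<dots> = (\<Sum>u\<in>A. \<Sum>v\<in>B u. \<Sum>U\<in>P. (if g u v = U then c u v * \<phi> U else 0))"
    by (simp only: sum.swap[of _ P] sum.swap[of _ P "B _"])
  also have "\<dots> = (\<Sum>u\<in>A. \<Sum>v\<in>B u. c u v * \<phi> (g u v))"
    using assms by (intro sum.cong refl) (simp add: sum.delta)
  finally show ?thesis .
qed

lemma sum_symmetric_rel_swap:
  fixes w p :: "'a \<Rightarrow> 'a \<Rightarrow> real"
  assumes "\<And>u v. R u v \<Longrightarrow> R v u"
  shows "(\<Sum>u\<in>A. \<Sum>v\<in>A. if R u v then w u v * (p u v - p v u) else 0)
       = (\<Sum>u\<in>A. \<Sum>v\<in>A. if R u v then (w u v - w v u) * p u v else 0)"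
proof -
  have split: "(\<Sum>u\<in>A. \<Sum>v\<in>A. if R u v then f u v - g u v else 0)
      = (\<Sum>u\<in>A. \<Sum>v\<in>A. if R u v then f u v else 0) - (\<Sum>u\<in>A. \<Sum>v\<in>A. if R u v then g u v else 0)"
    for f g :: "'a \<Rightarrow> 'a \<Rightarrow> real"
  proof -
    have "(if R u v then f u v - g u v else 0) = (if R u v then f u v else 0) - (if R u v then g u v else 0)"
      for u v by simp
    then show ?thesis by (simp only: sum_subtractf)
  qed
  have "(\<Sum>u\<in>A. \<Sum>v\<in>A. if R u v then w u v * p v u else 0)
      = (\<Sum>v\<in>A. \<Sum>u\<in>A. if R u v then w u v * p v u else 0)"
    by (rule sum.swap)
  also have "\<dots> = (\<Sum>u\<in>A. \<Sum>v\<in>A. if R u v then w v u * p u v else 0)"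
    using assms by (intro sum.cong refl) auto
  finally have swapped: "(\<Sum>u\<in>A. \<Sum>v\<in>A. if R u v then w u v * p v u else 0) = \<dots>" .
  show ?thesis
    unfolding right_diff_distrib left_diff_distrib split swapped ..
qed

lemma rtranclp_exits_set:
  assumes "R\<^sup>*\<^sup>* a b" "a \<in> S" "b \<notin> S"
  shows "\<exists>u v. R u v \<and> u \<in> S \<and> v \<notin> S"
  using assms by (induction rule: rtranclp_induct) blast+

lemma card_le_sum_fit: "r \<ge> 1 \<Longrightarrow> real (card A) \<le> (\<Sum>x\<in>A. fit r S x)"
  using sum_mono[of A "\<lambda>_. 1::real" "fit r S"] by (simp add: fit_def)

lemma sum_fit_le: "r \<ge> 1 \<Longrightarrow> (\<Sum>x\<in>A. fit r S x) \<le> r * real (card A)"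
  using sum_mono[of A "fit r S" "\<lambda>_. r"] by (simp add: fit_def mult.commute)

lemma card_repl_diff:
  assumes "finite S"
  shows "real (card (repl S u v)) - real (card S)
       = of_bool (u \<in> S \<and> v \<notin> S) - of_bool (v \<in> S \<and> u \<notin> S)"
proof (cases "u \<in> S")
  case True
  then show ?thesis using assms by (simp add: repl_def card_insert_if)
next
  case u_notin: False
  show ?thesis
  proof (cases "v \<in> S")
    case True
    then have "card S > 0" using assms card_gt_0_iff by blast
    then show ?thesis using u_notin True assms by (simp add: repl_def card_Diff_singleton of_nat_diff)
  qed (use u_notin in \<open>simp add: repl_def\<close>)
qed

lemma mutant_rate_ge_resident_rate:
  fixes F n du dv Fu Fv r :: real
  assumes "r \<ge> 1" "n > 0" "du > 0" "dv > 0" "Fv > 0"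
    and "n \<le> F" "F \<le> r * n" "du \<le> Fu" "Fv \<le> r * dv"
  shows "1 / F / dv + 1 / Fu / n \<le> r / F / du + r / Fv / n"
proof -
  have F_pos: "F > 0" using assms by linarith
  have "1 / Fu / n \<le> 1 / du / n"
    using assms by (intro divide_right_mono) (simp_all add: frac_le)
  moreover have "1 / dv / n \<le> r / Fv / n"
    using assms by (intro divide_right_mono) (simp_all add: field_simps)
  moreover have "0 \<le> (r / F - 1 / n) / du + (1 / n - 1 / F) / dv"
    using assms F_pos by (intro add_nonneg_nonneg divide_nonneg_pos) (simp_all add: field_simps)
  ultimately show ?thesis
    by (simp add: diff_divide_distrib mult.commute)
qed

locale half_mixed_moran =
  fixes V :: "'a set" and E :: "'a \<Rightarrow> 'a \<Rightarrow> bool" and r :: real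
  assumes conn_graph: "conn_graph V E" and r_ge_1: "r \<ge> 1"
begin

lemma finite_V: "finite V"
  and card_V_ge_2: "card V \<ge> 2"
  and edge_in_V: "E u v \<Longrightarrow> u \<in> V \<and> v \<in> V"
  and edge_sym: "E u v \<Longrightarrow> E v u"
  and connected: "u \<in> V \<Longrightarrow> v \<in> V \<Longrightarrow> E\<^sup>*\<^sup>* u v"
  using conn_graph by (simp_all add: conn_graph_def)

lemma card_V_pos: "real (card V) > 0"
  using card_V_ge_2 by simp

lemma finite_nbrs: "finite (nbrs V E u)"
  using finite_V by (simp add: nbrs_def)

lemma nbrs_subset: "nbrs V E u \<subseteq> V"
  by (auto simp: nbrs_def)

lemma nbrs_nonempty:
  assumes "u \<in> V"
  shows "nbrs V E u \<noteq> {}"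
proof -
  have "\<not> V \<subseteq> {u}"
    using card_mono[of "{u}" V] card_V_ge_2 by auto
  then obtain w where "w \<in> V" "w \<noteq> u"
    by blast
  then obtain z where "E u z"
    using connected[OF assms] by (metis converse_rtranclpE)
  then show ?thesis using edge_in_V by (auto simp: nbrs_def)
qed

lemma sum_nbrs: "(\<Sum>v\<in>nbrs V E u. f v) = (\<Sum>v\<in>V. if E u v then f v else 0)"
  by (simp add: nbrs_def sum.inter_filter finite_V)

lemma exists_boundary_edge:
  assumes "S \<subseteq> V" "S \<noteq> {}" "S \<noteq> V"
  shows "\<exists>u v. E u v \<and> u \<in> S \<and> v \<notin> S"
proof -
  obtain a b where "a \<in> S" "b \<in> V" "b \<notin> S" using assms by blast
  then show ?thesis using rtranclp_exits_set[of E a b S] connected assms(1) by blast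
qed

definition total_fit :: "'a set \<Rightarrow> real"
  where "total_fit S = (\<Sum>x\<in>V. fit r S x)"

definition deg :: "'a \<Rightarrow> real"
  where "deg u = real (card (nbrs V E u))"

definition nbr_fit :: "'a set \<Rightarrow> 'a \<Rightarrow> real"
  where "nbr_fit S v = (\<Sum>x\<in>nbrs V E v. fit r S x)"

text \<open>The probability that one step copies the type of \<open>u\<close> onto its neighbour \<open>v\<close>: in the
  Birth-death half \<open>u\<close> reproduces and picks \<open>v\<close>, in the death-Birth half \<open>v\<close> dies and
  picks \<open>u\<close>.\<close>
definition edge_weight :: "'a set \<Rightarrow> 'a \<Rightarrow> 'a \<Rightarrow> real"
  where "edge_weight S u v =
    (fit r S u / total_fit S / deg u + fit r S u / nbr_fit S v / real (card V)) / 2"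

abbreviation trans_prob :: "'a set \<Rightarrow> 'a set \<Rightarrow> real"
  where "trans_prob \<equiv> mixed_trans V E (1/2) r"

lemma total_fit_bounds: "real (card V) \<le> total_fit S" "total_fit S \<le> r * real (card V)"
  unfolding total_fit_def by (intro card_le_sum_fit sum_fit_le r_ge_1)+

lemma nbr_fit_bounds: "deg v \<le> nbr_fit S v" "nbr_fit S v \<le> r * deg v"
  unfolding nbr_fit_def deg_def by (intro card_le_sum_fit sum_fit_le r_ge_1)+

lemma deg_pos: "u \<in> V \<Longrightarrow> deg u > 0"
  using nbrs_nonempty finite_nbrs by (simp add: deg_def card_gt_0_iff)

lemma deg_le_card_V: "deg u \<le> real (card V)"
  using card_mono[OF finite_V nbrs_subset] by (simp add: deg_def)

lemma total_fit_pos: "total_fit S > 0"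
  using total_fit_bounds(1)[of S] card_V_pos by linarith

lemma nbr_fit_pos: "v \<in> V \<Longrightarrow> nbr_fit S v > 0"
  using nbr_fit_bounds(1)[of v S] deg_pos[of v] by linarith

lemma fit_nonneg: "fit r S x \<ge> 0"
  using r_ge_1 by (simp add: fit_def)

lemma edge_weight_nonneg: "edge_weight S u v \<ge> 0"
  unfolding edge_weight_def total_fit_def nbr_fit_def deg_def
  by (auto intro!: divide_nonneg_nonneg add_nonneg_nonneg mult_nonneg_nonneg sum_nonneg fit_nonneg)

lemma trans_prob_nonneg: "trans_prob S U \<ge> 0"
  unfolding mixed_trans_def bd_trans_def db_trans_def
  by (auto intro!: add_nonneg_nonneg mult_nonneg_nonneg sum_nonneg divide_nonneg_nonneg fit_nonneg)

lemma bd_trans_expectation: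
  assumes "S \<subseteq> V"
  shows "(\<Sum>U\<in>Pow V. bd_trans V E r S U * \<phi> U)
       = (\<Sum>u\<in>V. \<Sum>v\<in>nbrs V E u. fit r S u / total_fit S * (1 / deg u) * \<phi> (repl S u v))"
  unfolding bd_trans_def total_fit_def deg_def
  by (rule sum_indicator_pushforward)
    (use assms finite_V finite_nbrs nbrs_subset in \<open>auto simp: repl_def\<close>)

lemma db_trans_expectation:
  assumes "S \<subseteq> V"
  shows "(\<Sum>U\<in>Pow V. db_trans V E r S U * \<phi> U)
       = (\<Sum>v\<in>V. \<Sum>u\<in>nbrs V E v. 1 / real (card V) * (fit r S u / nbr_fit S v) * \<phi> (repl S u v))"
  unfolding db_trans_def nbr_fit_def
  by (rule sum_indicator_pushforward)
    (use assms finite_V finite_nbrs nbrs_subset in \<open>auto simp: repl_def\<close>)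

lemma trans_prob_expectation:
  assumes "S \<subseteq> V"
  shows "(\<Sum>U\<in>Pow V. trans_prob S U * \<phi> U)
       = (\<Sum>u\<in>V. \<Sum>v\<in>V. if E u v then edge_weight S u v * \<phi> (repl S u v) else 0)"
proof -
  have "(\<Sum>U\<in>Pow V. trans_prob S U * \<phi> U)
      = 1/2 * (\<Sum>U\<in>Pow V. bd_trans V E r S U * \<phi> U) + 1/2 * (\<Sum>U\<in>Pow V. db_trans V E r S U * \<phi> U)"
    by (simp add: mixed_trans_def sum.distrib sum_distrib_left algebra_simps)
  also have "(\<Sum>U\<in>Pow V. db_trans V E r S U * \<phi> U) = (\<Sum>u\<in>V. \<Sum>v\<in>V. if E v u then
       1 / real (card V) * (fit r S u / nbr_fit S v) * \<phi> (repl S u v) else 0)"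
    unfolding db_trans_expectation[OF assms] sum_nbrs by (rule sum.swap)
  also have "\<dots> = (\<Sum>u\<in>V. \<Sum>v\<in>V. if E u v then
       1 / real (card V) * (fit r S u / nbr_fit S v) * \<phi> (repl S u v) else 0)"
    using edge_sym by (intro sum.cong refl) metis
  finally show ?thesis
    unfolding bd_trans_expectation[OF assms] sum_nbrs
    by (simp add: sum_distrib_left sum.distrib[symmetric] edge_weight_def algebra_simps
        add_divide_distrib if_distrib cong: if_cong)
qed

lemma trans_prob_sum_eq_1:
  assumes "S \<subseteq> V"
  shows "(\<Sum>U\<in>Pow V. trans_prob S U) = 1"
proof -
  have "(\<Sum>U\<in>Pow V. bd_trans V E r S U)
      = (\<Sum>u\<in>V. \<Sum>v\<in>nbrs V E u. fit r S u / total_fit S * (1 / deg u))"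
    using bd_trans_expectation[OF assms, of "\<lambda>_. 1"] by simp
  also have "\<dots> = (\<Sum>u\<in>V. fit r S u / total_fit S)"
    using deg_pos by (intro sum.cong refl) (simp add: deg_def)
  also have "\<dots> = 1"
    using total_fit_pos[of S] by (simp add: sum_divide_distrib[symmetric] total_fit_def)
  finally have bd: "(\<Sum>U\<in>Pow V. bd_trans V E r S U) = 1" .
  have "(\<Sum>U\<in>Pow V. db_trans V E r S U)
      = (\<Sum>v\<in>V. \<Sum>u\<in>nbrs V E v. 1 / real (card V) * (fit r S u / nbr_fit S v))"
    using db_trans_expectation[OF assms, of "\<lambda>_. 1"] by simp
  also have "\<dots> = (\<Sum>v\<in>V. 1 / real (card V))"
  proof (intro sum.cong refl)
    fix v assume "v \<in> V"
    then show "(\<Sum>u\<in>nbrs V E v. 1 / real (card V) * (fit r S u / nbr_fit S v)) = 1 / real (card V)"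
      using nbr_fit_pos[of v S]
      by (simp add: sum_distrib_left[symmetric] sum_divide_distrib[symmetric] nbr_fit_def)
  qed
  also have "\<dots> = 1"
    using card_V_pos by simp
  finally have db: "(\<Sum>U\<in>Pow V. db_trans V E r S U) = 1" .
  show ?thesis
    using bd db by (simp add: mixed_trans_def sum.distrib sum_divide_distrib[symmetric])
qed

lemma trans_prob_from_V: "(\<Sum>U\<in>Pow V. trans_prob V U * \<phi> U) = \<phi> V"
proof -
  have "(\<Sum>U\<in>Pow V. trans_prob V U * \<phi> U)
      = (\<Sum>u\<in>V. \<Sum>v\<in>V. if E u v then edge_weight V u v * \<phi> V else 0)"
    unfolding trans_prob_expectation[OF order_refl]
    using edge_in_V by (intro sum.cong refl) (auto simp: repl_def insert_absorb)
  also have "\<dots> = (\<Sum>U\<in>Pow V. trans_prob V U * \<phi> V)"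
    by (rule trans_prob_expectation[symmetric]) simp
  also have "\<dots> = \<phi> V"
    using trans_prob_sum_eq_1[of V] by (simp add: sum_distrib_right[symmetric])
  finally show ?thesis .
qed

lemma edge_weight_mutant_ge_resident:
  assumes "E u v" "u \<in> S" "v \<notin> S"
  shows "edge_weight S v u \<le> edge_weight S u v"
proof -
  have "u \<in> V" "v \<in> V" using edge_in_V assms by auto
  then have "1 / total_fit S / deg v + 1 / nbr_fit S u / real (card V)
      \<le> r / total_fit S / deg u + r / nbr_fit S v / real (card V)"
    by (intro mutant_rate_ge_resident_rate r_ge_1 card_V_pos deg_pos nbr_fit_pos
        total_fit_bounds nbr_fit_bounds)
  then have "(1 / total_fit S / deg v + 1 / nbr_fit S u / real (card V)) / 2
      \<le> (r / total_fit S / deg u + r / nbr_fit S v / real (card V)) / 2"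
    by (rule divide_right_mono) simp
  then show ?thesis
    by (simp only: edge_weight_def fit_def assms(2,3) if_True if_False)
qed

lemma trans_expected_card_ge:
  assumes "S \<subseteq> V"
  shows "real (card S) \<le> (\<Sum>U\<in>Pow V. trans_prob S U * real (card U))"
proof -
  have fin: "finite S" using assms finite_V finite_subset by blast
  define p where "p u v = (of_bool (u \<in> S \<and> v \<notin> S) :: real)" for u v
  have "(\<Sum>U\<in>Pow V. trans_prob S U * real (card U)) - real (card S)
      = (\<Sum>U\<in>Pow V. trans_prob S U * (real (card U) - real (card S)))"
    using trans_prob_sum_eq_1[OF assms]
    by (simp add: right_diff_distrib sum_subtractf sum_distrib_right[symmetric])
  also have "\<dots> = (\<Sum>u\<in>V. \<Sum>v\<in>V. if E u v then edge_weight S u v * (p u v - p v u) else 0)"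
    unfolding trans_prob_expectation[OF assms] card_repl_diff[OF fin] p_def ..
  also have "\<dots> = (\<Sum>u\<in>V. \<Sum>v\<in>V. if E u v then (edge_weight S u v - edge_weight S v u) * p u v else 0)"
    using edge_sym by (rule sum_symmetric_rel_swap)
  also have "\<dots> \<ge> 0"
    using edge_weight_mutant_ge_resident by (intro sum_nonneg) (auto simp: p_def)
  finally show ?thesis by simp
qed

lemma trans_expected_sq_jump_ge:
  assumes "S \<subseteq> V" "S \<noteq> {}" "S \<noteq> V"
  shows "1 / (2 * real (card V) ^ 2)
       \<le> (\<Sum>U\<in>Pow V. trans_prob S U * (real (card U) - real (card S))\<^sup>2)"
proof -
  have fin: "finite S" using assms finite_V finite_subset by blast
  obtain u v where uv: "E u v" "u \<in> S" "v \<notin> S" using exists_boundary_edge[OF assms] by blast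
  have in_V: "u \<in> V" "v \<in> V" using edge_in_V uv by auto
  define g where "g u v = (if E u v then edge_weight S u v * (real (card (repl S u v)) - real (card S))\<^sup>2 else 0)"
    for u v
  have g_nonneg: "g u' v' \<ge> 0" for u' v' unfolding g_def using edge_weight_nonneg by simp
  have "1 / (2 * real (card V) ^ 2) = 1 / real (card V) * (1 / real (card V)) / 2"
    by (simp add: power2_eq_square)
  also have "\<dots> \<le> r / total_fit S * (1 / deg u) / 2"
    using total_fit_bounds(2)[of S] total_fit_pos[of S] deg_le_card_V[of u] deg_pos[OF in_V(1)]
      card_V_pos r_ge_1
    by (intro divide_right_mono mult_mono) (simp_all add: field_simps)
  also have "\<dots> \<le> edge_weight S u v"
    using uv nbr_fit_pos[OF in_V(2), of S] card_V_pos r_ge_1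
    by (simp add: edge_weight_def fit_def add_divide_distrib)
  also have "\<dots> = g u v"
    using uv card_repl_diff[OF fin, of u v] by (simp add: g_def)
  also have "\<dots> \<le> (\<Sum>v'\<in>V. g u v')"
    using in_V g_nonneg finite_V by (intro member_le_sum) auto
  also have "\<dots> \<le> (\<Sum>u'\<in>V. \<Sum>v'\<in>V. g u' v')"
    using in_V g_nonneg finite_V by (intro member_le_sum sum_nonneg) auto
  also have "\<dots> = (\<Sum>U\<in>Pow V. trans_prob S U * (real (card U) - real (card S))\<^sup>2)"
    unfolding g_def by (rule trans_prob_expectation[OF assms(1), symmetric])
  finally show ?thesis .
qed

definition transient :: "'a set \<Rightarrow> real"
  where "transient S = of_bool (S \<noteq> {} \<and> S \<noteq> V)"

lemma trans_expected_card_sq_ge: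
  assumes "S \<subseteq> V"
  shows "real (card S) ^ 2 + 1 / (2 * real (card V) ^ 2) * transient S
       \<le> (\<Sum>U\<in>Pow V. trans_prob S U * real (card U) ^ 2)"
proof -
  let ?c = "real (card S)"
  have "(\<Sum>U\<in>Pow V. trans_prob S U * real (card U) ^ 2)
     = (\<Sum>U\<in>Pow V. trans_prob S U * (real (card U) - ?c)\<^sup>2 + 2 * ?c * (trans_prob S U * real (card U))
         - ?c\<^sup>2 * trans_prob S U)"
    by (intro sum.cong refl) (simp add: algebra_simps power2_eq_square)
  also have "\<dots> = (\<Sum>U\<in>Pow V. trans_prob S U * (real (card U) - ?c)\<^sup>2)
       + 2 * ?c * (\<Sum>U\<in>Pow V. trans_prob S U * real (card U)) - ?c\<^sup>2 * (\<Sum>U\<in>Pow V. trans_prob S U)"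
    by (simp add: sum.distrib sum_subtractf sum_distrib_left)
  finally have decomp: "(\<Sum>U\<in>Pow V. trans_prob S U * real (card U) ^ 2) = \<dots>" .
  have "1 / (2 * real (card V) ^ 2) * transient S
      \<le> (\<Sum>U\<in>Pow V. trans_prob S U * (real (card U) - ?c)\<^sup>2)"
    using trans_expected_sq_jump_ge[OF assms] trans_prob_nonneg
    by (auto simp: transient_def intro!: sum_nonneg)
  moreover have "2 * ?c * ?c \<le> 2 * ?c * (\<Sum>U\<in>Pow V. trans_prob S U * real (card U))"
    using trans_expected_card_ge[OF assms] by (intro mult_left_mono) auto
  ultimately show ?thesis
    unfolding decomp trans_prob_sum_eq_1[OF assms] by (simp add: power2_eq_square)
qed

definition expect :: "nat \<Rightarrow> ('a set \<Rightarrow> real) \<Rightarrow> 'a set \<Rightarrow> real"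
  where "expect t \<phi> S = (\<Sum>W\<in>Pow V. msteps V E (1/2) r t S W * \<phi> W)"

lemma msteps_nonneg: "msteps V E (1/2) r t S W \<ge> 0"
  by (induction t arbitrary: S) (auto intro!: sum_nonneg mult_nonneg_nonneg trans_prob_nonneg)

lemma expect_0:
  assumes "S \<subseteq> V"
  shows "expect 0 \<phi> S = \<phi> S"
proof -
  have "expect 0 \<phi> S = (\<Sum>W\<in>Pow V. if S = W then \<phi> W else 0)"
    unfolding expect_def by (intro sum.cong refl) auto
  then show ?thesis
    using assms finite_V by simp
qed

lemma expect_Suc: "expect (Suc t) \<phi> S = (\<Sum>U\<in>Pow V. trans_prob S U * expect t \<phi> U)"
proof -
  have "expect (Suc t) \<phi> S
      = (\<Sum>W\<in>Pow V. \<Sum>U\<in>Pow V. trans_prob S U * (msteps V E (1/2) r t U W * \<phi> W))"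
    by (simp add: expect_def sum_distrib_right mult.assoc)
  also have "\<dots> = (\<Sum>U\<in>Pow V. \<Sum>W\<in>Pow V. trans_prob S U * (msteps V E (1/2) r t U W * \<phi> W))"
    by (rule sum.swap)
  also have "\<dots> = (\<Sum>U\<in>Pow V. trans_prob S U * expect t \<phi> U)"
    by (simp add: expect_def sum_distrib_left)
  finally show ?thesis .
qed

lemma expect_nonneg: "(\<And>W. W \<subseteq> V \<Longrightarrow> \<phi> W \<ge> 0) \<Longrightarrow> expect t \<phi> S \<ge> 0"
  unfolding expect_def by (intro sum_nonneg mult_nonneg_nonneg msteps_nonneg) auto

lemma expect_mono: "(\<And>W. W \<subseteq> V \<Longrightarrow> \<phi> W \<le> \<psi> W) \<Longrightarrow> expect t \<phi> S \<le> expect t \<psi> S"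
  unfolding expect_def by (intro sum_mono mult_left_mono msteps_nonneg) auto

lemma expect_lincomb: "expect t (\<lambda>W. a * \<phi> W + b * \<psi> W) S = a * expect t \<phi> S + b * expect t \<psi> S"
  unfolding expect_def by (simp add: sum.distrib sum_distrib_left algebra_simps)

lemma expect_const: "S \<subseteq> V \<Longrightarrow> expect t (\<lambda>_. c) S = c"
proof (induction t arbitrary: S)
  case (Suc t)
  then have "expect (Suc t) (\<lambda>_. c) S = (\<Sum>U\<in>Pow V. trans_prob S U * c)"
    unfolding expect_Suc by (intro sum.cong refl) auto
  also have "\<dots> = c"
    using trans_prob_sum_eq_1[OF Suc.prems] by (simp add: sum_distrib_right[symmetric])
  finally show ?case .
qed (simp add: expect_0)

lemma expect_card_ge: "S \<subseteq> V \<Longrightarrow> real (card S) \<le> expect t (\<lambda>W. real (card W)) S"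
proof (induction t arbitrary: S)
  case (Suc t)
  have "(\<Sum>U\<in>Pow V. trans_prob S U * real (card U)) \<le> expect (Suc t) (\<lambda>W. real (card W)) S"
    unfolding expect_Suc using Suc.IH by (intro sum_mono mult_left_mono trans_prob_nonneg) auto
  then show ?case using trans_expected_card_ge[OF Suc.prems] by linarith
qed (simp add: expect_0)

lemma expect_card_sq_ge:
  "S \<subseteq> V \<Longrightarrow> real (card S) ^ 2 + 1 / (2 * real (card V) ^ 2) * (\<Sum>s<t. expect s transient S)
     \<le> expect t (\<lambda>W. real (card W) ^ 2) S"
proof (induction t arbitrary: S)
  case (Suc t)
  let ?d = "1 / (2 * real (card V) ^ 2)"
  have "(\<Sum>U\<in>Pow V. trans_prob S U * (real (card U) ^ 2 + ?d * (\<Sum>s<t. expect s transient U)))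
     \<le> expect (Suc t) (\<lambda>W. real (card W) ^ 2) S"
    unfolding expect_Suc using Suc.IH by (intro sum_mono mult_left_mono trans_prob_nonneg) auto
  moreover have "(\<Sum>U\<in>Pow V. trans_prob S U * (real (card U) ^ 2 + ?d * (\<Sum>s<t. expect s transient U)))
     = (\<Sum>U\<in>Pow V. trans_prob S U * real (card U) ^ 2) + ?d * (\<Sum>s<t. expect (Suc s) transient S)"
    by (simp add: expect_Suc distrib_left sum.distrib sum_distrib_left sum.swap[of _ "{..<t}"]
        algebra_simps sum_divide_distrib)
  moreover have "(\<Sum>s<Suc t. expect s transient S) = transient S + (\<Sum>s<t. expect (Suc s) transient S)"
    by (subst sum.lessThan_Suc_shift) (simp add: expect_0[OF Suc.prems])
  ultimately show ?case
    using trans_expected_card_sq_ge[OF Suc.prems] by (simp add: distrib_left)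
qed (simp add: expect_0)

lemma sum_expect_transient_le:
  assumes "S \<subseteq> V"
  shows "(\<Sum>s<t. expect s transient S) \<le> 2 * real (card V) ^ 4"
proof -
  let ?n = "real (card V)"
  have "expect t (\<lambda>W. real (card W) ^ 2) S \<le> expect t (\<lambda>_. ?n ^ 2) S"
    using card_mono[OF finite_V] by (intro expect_mono power_mono) auto
  also have "\<dots> = ?n ^ 2"
    by (rule expect_const[OF assms])
  finally have "1 / (2 * ?n ^ 2) * (\<Sum>s<t. expect s transient S) \<le> ?n ^ 2"
    using expect_card_sq_ge[OF assms, of t] zero_le_power2[of "real (card S)"] by linarith
  then have "(\<Sum>s<t. expect s transient S) / (2 * ?n ^ 2) \<le> ?n ^ 2"
    by simp
  then have "(\<Sum>s<t. expect s transient S) \<le> ?n ^ 2 * (2 * ?n ^ 2)"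
    using card_V_pos by (simp add: pos_divide_le_eq)
  also have "\<dots> = 2 * ?n ^ 4"
    by algebra
  finally show ?thesis .
qed

lemma expect_transient_tendsto_0:
  assumes "S \<subseteq> V"
  shows "(\<lambda>t. expect t transient S) \<longlonglongrightarrow> 0"
proof (rule summable_LIMSEQ_zero, rule summableI_nonneg_bounded)
  show "0 \<le> expect t transient S" for t
    by (rule expect_nonneg) (simp add: transient_def)
qed (rule sum_expect_transient_le[OF assms])

lemma msteps_to_V_eq_expect: "msteps V E (1/2) r t S V = expect t (\<lambda>W. of_bool (W = V)) S"
proof -
  have "expect t (\<lambda>W. of_bool (W = V)) S = (\<Sum>W\<in>Pow V. if W = V then msteps V E (1/2) r t S W else 0)"
    unfolding expect_def by (intro sum.cong refl) auto
  then show ?thesis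
    using finite_V by simp
qed

lemma msteps_to_V_mono: "msteps V E (1/2) r t S V \<le> msteps V E (1/2) r (Suc t) S V"
proof (induction t arbitrary: S)
  case 0
  show ?case
  proof (cases "S = V")
    case True
    then show ?thesis
      using trans_prob_from_V[of "\<lambda>W. if W = V then 1 else 0"] by simp
  next
    case False
    then show ?thesis
      using msteps_nonneg[of "Suc 0" S V] by simp
  qed
next
  case (Suc t)
  show ?case
    unfolding msteps.simps(2)[of V E "1/2" r "Suc t" S V] msteps.simps(2)[of V E "1/2" r t S V]
    by (intro sum_mono mult_left_mono Suc.IH trans_prob_nonneg)
qed

lemma msteps_to_V_tendsto_fp:
  assumes "S \<subseteq> V"
  shows "(\<lambda>t. msteps V E (1/2) r t S V) \<longlonglongrightarrow> fp V E (1/2) r S"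
proof -
  have bounded: "\<forall>t. msteps V E (1/2) r t S V \<le> 1"
  proof
    fix t
    have "expect t (\<lambda>W. of_bool (W = V)) S \<le> expect t (\<lambda>_. 1) S"
      by (rule expect_mono) simp
    then show "msteps V E (1/2) r t S V \<le> 1"
      using expect_const[OF assms] by (simp add: msteps_to_V_eq_expect)
  qed
  have "incseq (\<lambda>t. msteps V E (1/2) r t S V)"
    by (rule incseq_SucI) (rule msteps_to_V_mono)
  then obtain L where L: "(\<lambda>t. msteps V E (1/2) r t S V) \<longlonglongrightarrow> L"
    using bounded by (rule incseq_convergent)
  moreover have "fp V E (1/2) r S = L"
    unfolding fp_def using L by (rule limI)
  ultimately show ?thesis
    by simp
qed

lemma msteps_to_V_ge_card_ratio:
  assumes "S \<subseteq> V"
  shows "real (card S) / real (card V) - expect t transient S \<le> msteps V E (1/2) r t S V"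
proof -
  let ?n = "real (card V)"
  have "real (card S) \<le> expect t (\<lambda>W. real (card W)) S"
    by (rule expect_card_ge[OF assms])
  also have "\<dots> \<le> expect t (\<lambda>W. ?n * of_bool (W = V) + ?n * transient W) S"
    using card_mono[OF finite_V] by (intro expect_mono) (auto simp: transient_def)
  also have "\<dots> = ?n * (msteps V E (1/2) r t S V + expect t transient S)"
    by (simp add: expect_lincomb msteps_to_V_eq_expect distrib_left)
  finally show ?thesis
    using card_V_pos by (simp add: field_simps)
qed

lemma fp_ge_card_ratio:
  assumes "S \<subseteq> V"
  shows "real (card S) / real (card V) \<le> fp V E (1/2) r S"
proof (rule LIMSEQ_le)
  show "(\<lambda>t. real (card S) / real (card V) - expect t transient S) \<longlonglongrightarrow> real (card S) / real (card V)"
    using tendsto_diff[OF tendsto_const expect_transient_tendsto_0[OF assms]] by simp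
  show "(\<lambda>t. msteps V E (1/2) r t S V) \<longlonglongrightarrow> fp V E (1/2) r S"
    by (rule msteps_to_V_tendsto_fp[OF assms])
  show "\<exists>N. \<forall>t\<ge>N. real (card S) / real (card V) - expect t transient S \<le> msteps V E (1/2) r t S V"
    using msteps_to_V_ge_card_ratio[OF assms] by blast
qed

end

theorem mainTheorem6:
  fixes V :: "'a set" and E :: "'a \<Rightarrow> 'a \<Rightarrow> bool" and r :: real and S0 :: "'a set"
  assumes "conn_graph V E" and "r \<ge> 1" and "S0 \<subseteq> V"
  shows "fp V E (1/2) r S0 \<ge> real (card S0) / real (card V)"
proof -
  interpret half_mixed_moran V E r
    using assms(1,2) by unfold_locales
  show ?thesis
    using fp_ge_card_ratio[OF assms(3)] .
qed

end
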